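(* $T(2,\omega^2)=4$.
   Context: $[c]=\{1,\dots,c\}$. Each ordinal $\alpha$ is identified with the linearly ordered set of ordinals $\beta<\alpha$; $\omega^2$ is the set of ordinals $\omega\cdot a+b$ with $a,b\in\mathbb{N}$, ordered lexicographically. $\binom{S}{n}$ is the set of $n$-element subsets of $S$. $\approx$ denotes order-equivalence. For a linearly ordered set $S$ and $n\in\mathbb{N}$, $T(n,S)$ is the least $t\in\mathbb{N}$ such that for every $c\ge 1$ and every coloring $\mathrm{COL}:\binom{S}{n}\to[c]$ there exists $S'\subseteq S$ with $S'\approx S$ and $|\mathrm{COL}(\binom{S'}{n})|\le t$ (or $\infty$ if no such $t$ exists). *)

theory Defs
  imports Main "HOL-Library.Product_Lexorder" "HOL-Library.Extended_Nat"
begin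

definition order_equiv :: "'a::linorder set \<Rightarrow> 'a set \<Rightarrow> bool" where
  "order_equiv A B \<longleftrightarrow> (\<exists>f. bij_betw f A B \<and> strict_mono_on A f)"

definition nsubsets :: "'a set \<Rightarrow> nat \<Rightarrow> 'a set set" where
  "nsubsets S n = {X. X \<subseteq> S \<and> finite X \<and> card X = n}"

definition T_bound :: "nat \<Rightarrow> 'a::linorder set \<Rightarrow> nat \<Rightarrow> bool" where
  "T_bound n S t \<longleftrightarrow>
     (\<forall>c::nat. c \<ge> 1 \<longrightarrow> (\<forall>COL :: 'a set \<Rightarrow> nat.
        COL ` nsubsets S n \<subseteq> {1..c} \<longrightarrow>
        (\<exists>S'. S' \<subseteq> S \<and> order_equiv S' S \<and> card (COL ` nsubsets S' n) \<le> t)))"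

definition T :: "nat \<Rightarrow> 'a::linorder set \<Rightarrow> enat" where
  "T n S = (if \<exists>t. T_bound n S t then enat (LEAST t. T_bound n S t) else \<infinity>)"

text \<open>omega^2 realised as nat \<times> nat with the lexicographic order:
  (a,b) corresponds to the ordinal omega*a+b.\<close>
definition omega2 :: "(nat \<times> nat) set" where
  "omega2 = UNIV"

end

theory Submission
  imports Defs "HOL-Library.Ramsey" "HOL-Library.Nat_Bijection"
begin

(*
  Upper bound: by Ramsey's theorem for 4-sets there is an infinite Y \<subseteq> \<nat> such that the colour
  of a pair of points of Y \<times> Y depends only on the relative order of their coordinates. Copy
  \<omega>\<^sup>2 into Y \<times> Y so that no two coordinates coincide except the first coordinates of points
  in the same row; then only four order patterns occur among pairs of points of the copy.

  Lower bound: colour a pair \<omega>a + b < \<omega>c + d by whether a = c and, if not, by the position of b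
  relative to c and d. In a copy of \<omega>\<^sup>2 each row is infinite and lies below the next row, so by
  pigeonhole it has points in a single block \<omega>a + \<nat> with arbitrarily large second coordinates,
  and every point of a later row lies in a later block. Choosing such points in suitable rows
  produces all four colours.
*)

lemma nsubsets_eq_nsets: "nsubsets S n = nsets S n"
  by (simp add: nsubsets_def nsets_def)

lemma order_equiv_UNIV_iff:
  fixes S :: "'a::linorder set"
  shows "order_equiv S UNIV \<longleftrightarrow> (\<exists>g::'a \<Rightarrow> 'a. strict_mono g \<and> range g = S)"
proof
  assume "order_equiv S UNIV"
  then obtain f :: "'a \<Rightarrow> 'a" where f: "bij_betw f S UNIV" "strict_mono_on S f"
    unfolding order_equiv_def by blast
  define g where "g = inv_into S f"
  have g: "bij_betw g UNIV S"
    using f(1) by (simp add: g_def bij_betw_inv_into)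
  have "strict_mono g"
  proof
    fix p q :: 'a
    assume "p < q"
    moreover have "f (g p) = p" "f (g q) = q"
      using f(1) by (simp_all add: g_def bij_betw_inv_into_right)
    ultimately show "g p < g q"
      using strict_mono_on_less[OF f(2)] bij_betwE[OF g] by (metis UNIV_I)
  qed
  with g show "\<exists>g::'a \<Rightarrow> 'a. strict_mono g \<and> range g = S"
    by (auto simp: bij_betw_def)
next
  assume "\<exists>g::'a \<Rightarrow> 'a. strict_mono g \<and> range g = S"
  then obtain g :: "'a \<Rightarrow> 'a" where g: "strict_mono g" "range g = S"
    by blast
  then have "bij_betw (inv g) S UNIV"
    by (metis bij_betw_inv_into strict_mono_imp_inj_on inj_on_imp_bij_betw)
  with g show "order_equiv S UNIV"
    unfolding order_equiv_def using strict_mono_inv_on_range by blast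
qed

lemma T_eqI:
  assumes "T_bound n S t" "\<And>t'. T_bound n S t' \<Longrightarrow> t \<le> t'"
  shows "T n S = enat t"
  using assms unfolding T_def by (auto intro!: Least_equality)

lemma lex_less_eq_imp_fst_le: "x \<le> y \<Longrightarrow> fst x \<le> fst (y :: 'a::order \<times> 'b::order)"
  by (auto simp: less_eq_prod_def)

lemma lex_bounded_infinite_set_has_unbounded_block:
  fixes Z :: "(nat \<times> nat) set"
  assumes "infinite Z" "Z \<subseteq> {..<y}"
  obtains a where "a < fst y" "\<And>M. \<exists>z\<in>Z. fst z = a \<and> M < snd z"
proof -
  have "fst z \<le> fst y" if "z \<in> Z" for z
    using assms(2) that lex_less_eq_imp_fst_le[of z y] by auto
  then have "Z \<subseteq> (\<Union>a\<le>fst y. Z \<inter> {z. fst z = a})"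
    by blast
  then have "infinite (\<Union>a\<le>fst y. Z \<inter> {z. fst z = a})"
    using assms(1) finite_subset by blast
  then obtain a where a: "a \<le> fst y" "infinite (Z \<inter> {z. fst z = a})"
    by (meson finite_UN_I finite_atMost atMost_iff)
  have unbounded: "\<exists>z\<in>Z. fst z = a \<and> M < snd z" for M
  proof (rule ccontr)
    assume "\<not> ?thesis"
    then have "Z \<inter> {z. fst z = a} \<subseteq> {a} \<times> {..M}"
      by (auto simp: not_less)
    then show False
      using a(2) finite_subset by blast
  qed
  have "a \<noteq> fst y"
  proof
    assume "a = fst y"
    then obtain z where z: "z \<in> Z" "fst z = fst y" "snd y < snd z"
      using unbounded by blast
    moreover have "z < y"
      using assms(2) z(1) by auto
    ultimately show False
      by (simp add: less_prod_def')
  qed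
  with a(1) have "a < fst y"
    by simp
  then show ?thesis
    using unbounded by (rule that)
qed

lemma strict_mono_row_has_unbounded_block:
  fixes g :: "nat \<times> nat \<Rightarrow> nat \<times> nat"
  assumes "strict_mono g" "\<And>k. g (i, k) < y"
  obtains a where "a < fst y" "\<And>M. \<exists>k. fst (g (i, k)) = a \<and> M < snd (g (i, k))"
proof -
  have "infinite (range (\<lambda>k. g (i, k)))"
    using assms(1) by (intro range_inj_infinite) (simp add: inj_def strict_mono_eq)
  moreover have "range (\<lambda>k. g (i, k)) \<subseteq> {..<y}"
    using assms(2) by auto
  ultimately obtain a where a: "a < fst y"
    and unbounded: "\<And>M. \<exists>z\<in>range (\<lambda>k. g (i, k)). fst z = a \<and> M < snd z"
    by (rule lex_bounded_infinite_set_has_unbounded_block) (rule that)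
  have "\<exists>k. fst (g (i, k)) = a \<and> M < snd (g (i, k))" for M
    using unbounded[of M] by auto
  with a show ?thesis
    by (rule that)
qed

lemma strict_mono_fst_first_column:
  fixes g :: "nat \<times> nat \<Rightarrow> nat \<times> nat"
  assumes "strict_mono g"
  shows "strict_mono (\<lambda>i. fst (g (i, 0)))"
proof (rule strict_mono_Suc_iff[THEN iffD2], rule allI)
  fix i
  have "g (i, k) < g (Suc i, 0)" for k
    using assms by (simp add: strict_mono_less)
  then obtain a where a: "a < fst (g (Suc i, 0))"
    "\<And>M. \<exists>k. fst (g (i, k)) = a \<and> M < snd (g (i, k))"
    by (rule strict_mono_row_has_unbounded_block[OF assms]) (rule that)
  from a(2)[of 0] obtain k where "fst (g (i, k)) = a"
    by blast
  moreover have "g (i, 0) \<le> g (i, k)"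
    using assms by (simp add: strict_mono_less_eq)
  then have "fst (g (i, 0)) \<le> fst (g (i, k))"
    by (rule lex_less_eq_imp_fst_le)
  ultimately show "fst (g (i, 0)) < fst (g (Suc i, 0))"
    using a(1) by simp
qed

definition omega2_pair_colour :: "nat \<times> nat \<Rightarrow> nat \<times> nat \<Rightarrow> nat" where
  "omega2_pair_colour x y =
     (if fst x = fst y then 1
      else if snd x < fst y \<and> snd x < snd y then 2
      else if snd x < snd y then 3
      else 4)"

lemma omega2_copy_has_colour_1:
  fixes g :: "nat \<times> nat \<Rightarrow> nat \<times> nat"
  assumes "strict_mono g"
  shows "\<exists>x\<in>range g. \<exists>y\<in>range g. x < y \<and> omega2_pair_colour x y = 1"
proof -
  have "g (0, k) < g (1, 0)" for k
    using assms by (simp add: strict_mono_less)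
  then obtain a where "a < fst (g (1, 0))"
    and row: "\<And>M. \<exists>k. fst (g (0, k)) = a \<and> M < snd (g (0, k))"
    by (rule strict_mono_row_has_unbounded_block[OF assms]) (rule that)
  from row[of 0] obtain k where k: "fst (g (0, k)) = a"
    by blast
  from row[of "snd (g (0, k))"] obtain l
    where l: "fst (g (0, l)) = a" "snd (g (0, k)) < snd (g (0, l))"
    by blast
  have "g (0, k) < g (0, l)"
    using k l by (simp add: less_prod_def')
  moreover have "omega2_pair_colour (g (0, k)) (g (0, l)) = 1"
    using k l by (simp add: omega2_pair_colour_def)
  ultimately show ?thesis
    by blast
qed

lemma omega2_copy_has_colour_2:
  fixes g :: "nat \<times> nat \<Rightarrow> nat \<times> nat"
  assumes "strict_mono g"
  shows "\<exists>x\<in>range g. \<exists>y\<in>range g. x < y \<and> omega2_pair_colour x y = 2"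
proof -
  define x where "x = g (0, 0)"
  define i where "i = Suc (fst x + snd x)"
  have "i \<le> fst (g (i, 0))"
    using strict_mono_fst_first_column[OF assms] by (rule strict_mono_imp_increasing)
  have "g (i, k) < g (Suc i, 0)" for k
    using assms by (simp add: strict_mono_less)
  then obtain a where "a < fst (g (Suc i, 0))"
    and row: "\<And>M. \<exists>k. fst (g (i, k)) = a \<and> M < snd (g (i, k))"
    by (rule strict_mono_row_has_unbounded_block[OF assms]) (rule that)
  from row[of "snd x"] obtain k where k: "snd x < snd (g (i, k))"
    by blast
  have "g (i, 0) \<le> g (i, k)"
    using assms by (simp add: strict_mono_less_eq)
  then have "i \<le> fst (g (i, k))"
    using \<open>i \<le> fst (g (i, 0))\<close> lex_less_eq_imp_fst_le order_trans by blast
  then have "x < g (i, k)" and "omega2_pair_colour x (g (i, k)) = 2"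
    using k by (auto simp: i_def less_prod_def' omega2_pair_colour_def)
  then show ?thesis
    unfolding x_def by blast
qed

lemma omega2_copy_has_colour_3:
  fixes g :: "nat \<times> nat \<Rightarrow> nat \<times> nat"
  assumes "strict_mono g"
  shows "\<exists>x\<in>range g. \<exists>y\<in>range g. x < y \<and> omega2_pair_colour x y = 3"
proof -
  have "g (1, k) < g (2, 0)" for k
    using assms by (simp add: strict_mono_less)
  then obtain a where "a < fst (g (2, 0))"
    and row1: "\<And>M. \<exists>k. fst (g (1, k)) = a \<and> M < snd (g (1, k))"
    by (rule strict_mono_row_has_unbounded_block[OF assms]) (rule that)
  from row1[of 0] obtain l0 where l0: "fst (g (1, l0)) = a"
    by blast
  have "g (0, k) < g (1, l0)" for k
    using assms by (simp add: strict_mono_less)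
  then obtain b where "b < fst (g (1, l0))"
    and row0: "\<And>M. \<exists>k. fst (g (0, k)) = b \<and> M < snd (g (0, k))"
    by (rule strict_mono_row_has_unbounded_block[OF assms]) (rule that)
  from row0[of a] obtain k where k: "fst (g (0, k)) = b" "a < snd (g (0, k))"
    by blast
  from row1[of "snd (g (0, k))"] obtain l
    where l: "fst (g (1, l)) = a" "snd (g (0, k)) < snd (g (1, l))"
    by blast
  have "g (0, k) < g (1, l)"
    using assms by (simp add: strict_mono_less)
  moreover have "omega2_pair_colour (g (0, k)) (g (1, l)) = 3"
    using \<open>b < fst (g (1, l0))\<close> l0 k l by (simp add: omega2_pair_colour_def)
  ultimately show ?thesis
    by blast
qed

lemma omega2_copy_has_colour_4:
  fixes g :: "nat \<times> nat \<Rightarrow> nat \<times> nat"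
  assumes "strict_mono g"
  shows "\<exists>x\<in>range g. \<exists>y\<in>range g. x < y \<and> omega2_pair_colour x y = 4"
proof -
  define y where "y = g (1, 0)"
  have "g (0, k) < y" for k
    using assms by (simp add: y_def strict_mono_less)
  then obtain b where "b < fst y"
    and row0: "\<And>M. \<exists>k. fst (g (0, k)) = b \<and> M < snd (g (0, k))"
    by (rule strict_mono_row_has_unbounded_block[OF assms]) (rule that)
  from row0[of "max (fst y) (snd y)"] obtain k
    where k: "fst (g (0, k)) = b" "max (fst y) (snd y) < snd (g (0, k))"
    by blast
  have "g (0, k) < y"
    by fact
  moreover have "omega2_pair_colour (g (0, k)) y = 4"
    using \<open>b < fst y\<close> k by (simp add: omega2_pair_colour_def)
  ultimately show ?thesis
    unfolding y_def by blast
qed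

lemma T_bound_omega2_ge_4:
  assumes "T_bound 2 omega2 t"
  shows "4 \<le> t"
proof -
  define COL where "COL = (\<lambda>X :: (nat \<times> nat) set. omega2_pair_colour (Min X) (Max X))"
  have COL_range: "COL ` A \<subseteq> {1..4}" for A
    by (auto simp: COL_def omega2_pair_colour_def)
  obtain S' where "order_equiv S' omega2" and card_S': "card (COL ` nsubsets S' 2) \<le> t"
    using assms COL_range unfolding T_bound_def by (metis one_le_numeral)
  then obtain g :: "nat \<times> nat \<Rightarrow> nat \<times> nat" where g: "strict_mono g" "range g = S'"
    by (auto simp: omega2_def order_equiv_UNIV_iff)
  have "{1..4} \<subseteq> COL ` nsubsets S' 2"
  proof
    fix c :: nat
    assume "c \<in> {1..4}"
    then have "c = 1 \<or> c = 2 \<or> c = 3 \<or> c = 4"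
      by auto
    then obtain x y where "x \<in> S'" "y \<in> S'" "x < y" "omega2_pair_colour x y = c"
      using omega2_copy_has_colour_1[OF g(1)] omega2_copy_has_colour_2[OF g(1)]
        omega2_copy_has_colour_3[OF g(1)] omega2_copy_has_colour_4[OF g(1)] g(2)
      by blast
    then have "{x, y} \<in> nsubsets S' 2" "COL {x, y} = c"
      by (auto simp: nsubsets_eq_nsets COL_def)
    then show "c \<in> COL ` nsubsets S' 2"
      by force
  qed
  moreover have "finite (COL ` nsubsets S' 2)"
    using finite_subset[OF COL_range] by simp
  ultimately have "card {1..4 :: nat} \<le> card (COL ` nsubsets S' 2)"
    by (intro card_mono)
  with card_S' show ?thesis
    by simp
qed

lemma Ramsey_finite_colours:
  fixes f :: "'a set \<Rightarrow> 'b"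
  assumes "infinite Z" "finite C" "f ` nsets Z r \<subseteq> C"
  obtains Y t where "Y \<subseteq> Z" "infinite Y" "f ` nsets Y r \<subseteq> {t}"
proof -
  obtain h where h: "bij_betw h C {0..<card C}"
    using ex_bij_betw_finite_nat[OF assms(2)] by blast
  have "h (f X) < card C" if "X \<in> nsets Z r" for X
    using bij_betwE[OF h] assms(3) that by auto
  then have hf: "(h \<circ> f) ` nsets Z r \<subseteq> {..<card C}"
    by auto
  obtain Y t where Y: "Y \<subseteq> Z" "infinite Y" "(h \<circ> f) ` nsets Y r \<subseteq> {t}"
    by (rule Ramsey_nsets[OF assms(1) hf]) (rule that)
  have same_colour: "f X = f X'" if "X \<in> nsets Y r" "X' \<in> nsets Y r" for X X'
  proof -
    have "f X \<in> C" "f X' \<in> C"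
      using that nsets_mono[OF Y(1)] assms(3) by auto
    moreover have "h (f X) = h (f X')"
      using Y(3) that by auto
    ultimately show ?thesis
      using bij_betw_imp_inj_on[OF h] by (auto dest: inj_onD)
  qed
  have "f X = f (SOME X. X \<in> nsets Y r)" if "X \<in> nsets Y r" for X
    using same_colour[OF that someI[of "\<lambda>X. X \<in> nsets Y r", OF that]] .
  then have "f ` nsets Y r \<subseteq> {f (SOME X. X \<in> nsets Y r)}"
    by blast
  with Y(1,2) show ?thesis
    by (rule that)
qed

text \<open>The last component only involves the three smallest elements; reading it off 4-sets lets
  a single application of Ramsey's theorem handle both kinds of pairs.\<close>

definition quad_colour ::
    "(('a \<times> 'a) set \<Rightarrow> 'c) \<Rightarrow> 'a::linorder set \<Rightarrow> 'c \<times> 'c \<times> 'c \<times> 'c" where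
  "quad_colour COL X =
     (let x = (!) (sorted_list_of_set X) in
      (COL {(x 0, x 1), (x 2, x 3)}, COL {(x 0, x 2), (x 1, x 3)},
       COL {(x 0, x 3), (x 1, x 2)}, COL {(x 0, x 1), (x 0, x 2)}))"

lemma quad_colour_ordered:
  fixes a b c d :: "'a::linorder"
  assumes "a < b" "b < c" "c < d"
  shows "quad_colour COL {a, b, c, d} =
    (COL {(a, b), (c, d)}, COL {(a, c), (b, d)}, COL {(a, d), (b, c)}, COL {(a, b), (a, c)})"
proof -
  have "sorted_wrt (<) [a, b, c, d]"
    using assms less_trans[of a b c] less_trans[of b c d] less_trans[of a c d] by simp
  then have "sorted_list_of_set {a, b, c, d} = [a, b, c, d]"
    by (intro strict_sorted_equal) (simp_all del: sorted_list_of_set_insert_remove)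
  then show ?thesis
    by (simp add: quad_colour_def)
qed

lemma strict_mono_prod_encode_snd: "strict_mono (\<lambda>j. prod_encode (i, j))"
  by (simp add: strict_mono_Suc_iff prod_encode_def)

text \<open>First coordinates use even indices of \<open>e\<close>, second coordinates odd ones, injectively in
  the point; so a pair of points uses four distinct values of \<open>e\<close>, or three if it lies in one
  row.\<close>

definition omega2_embedding :: "(nat \<Rightarrow> nat) \<Rightarrow> nat \<times> nat \<Rightarrow> nat \<times> nat" where
  "omega2_embedding e = (\<lambda>(i, j). (e (2 * i), e (Suc (2 * prod_encode (i, j)))))"

lemma strict_mono_omega2_embedding:
  assumes "strict_mono e"
  shows "strict_mono (omega2_embedding e)"
proof
  fix p q :: "nat \<times> nat"
  assume "p < q"
  then show "omega2_embedding e p < omega2_embedding e q"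
    using assms
    by (cases p; cases q)
      (auto simp: omega2_embedding_def less_prod_def' strict_mono_less
        strict_mono_less[OF strict_mono_prod_encode_snd])
qed

lemma omega2_embedding_pair_pattern:
  assumes "strict_mono e" "p < q"
  obtains a b c d where "a < b" "b < c" "c < d" "{a, b, c, d} \<subseteq> range e"
    "{omega2_embedding e p, omega2_embedding e q}
       \<in> {{(a, b), (c, d)}, {(a, c), (b, d)}, {(a, d), (b, c)}, {(a, b), (a, c)}}"
proof -
  obtain i j i' j' where pq: "p = (i, j)" "q = (i', j')"
    by (cases p, cases q)
  define A B C D where "A = 2 * i" and "B = Suc (2 * prod_encode (i, j))"
    and "C = 2 * i'" and "D = Suc (2 * prod_encode (i', j'))"
  have emb: "omega2_embedding e p = (e A, e B)" "omega2_embedding e q = (e C, e D)"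
    by (simp_all add: omega2_embedding_def pq A_def B_def C_def D_def)
  have "A < B" "C < D"
    using le_prod_encode_1[of i j] le_prod_encode_1[of i' j']
    by (simp_all add: A_def B_def C_def D_def)
  have e_less: "e x < e y \<longleftrightarrow> x < y" for x y
    using assms(1) by (rule strict_mono_less)
  consider (same_row) "i = i'" "j < j'" | (later_row) "i < i'"
    using assms(2) pq by (auto simp: less_prod_def')
  then show ?thesis
  proof cases
    case same_row
    then have "C = A" "B < D"
      by (simp_all add: A_def B_def C_def D_def strict_mono_less[OF strict_mono_prod_encode_snd])
    show ?thesis
      by (rule that[of "e A" "e B" "e D" "e (Suc D)"])
        (simp_all add: emb e_less \<open>C = A\<close> \<open>A < B\<close> \<open>B < D\<close>)
  next
    case later_row
    then have "A < C" "B \<noteq> D"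
      by (auto simp: A_def C_def B_def D_def)
    moreover have "B \<noteq> C"
      by (simp add: B_def C_def) presburger
    ultimately consider "B < C" | "C < B" "B < D" | "D < B"
      by linarith
    then show ?thesis
    proof cases
      case 1
      show ?thesis
        by (rule that[of "e A" "e B" "e C" "e D"])
          (simp_all add: emb e_less \<open>A < B\<close> \<open>C < D\<close> 1)
    next
      case 2
      show ?thesis
        by (rule that[of "e A" "e C" "e B" "e D"])
          (simp_all add: emb e_less \<open>A < C\<close> 2)
    next
      case 3
      show ?thesis
        by (rule that[of "e A" "e C" "e D" "e B"])
          (simp_all add: emb e_less \<open>A < C\<close> \<open>C < D\<close> 3 less_trans[OF \<open>C < D\<close> 3])
    qed
  qed
qed

lemma omega2_embedding_colours:
  assumes "quad_colour COL ` nsets Y 4 \<subseteq> {(t1, t2, t3, t4)}"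
    and "strict_mono e" "range e \<subseteq> Y"
  shows "COL ` nsets (range (omega2_embedding e)) 2 \<subseteq> {t1, t2, t3, t4}"
proof
  fix v
  assume "v \<in> COL ` nsets (range (omega2_embedding e)) 2"
  then obtain p q where "omega2_embedding e p < omega2_embedding e q"
    and v: "v = COL {omega2_embedding e p, omega2_embedding e q}"
    unfolding ordered_nsets_2_eq by blast
  then have "p < q"
    using strict_mono_less[OF strict_mono_omega2_embedding[OF assms(2)]] by blast
  then obtain a b c d where abcd: "a < b" "b < c" "c < d" "{a, b, c, d} \<subseteq> range e"
    and pattern: "{omega2_embedding e p, omega2_embedding e q}
       \<in> {{(a, b), (c, d)}, {(a, c), (b, d)}, {(a, d), (b, c)}, {(a, b), (a, c)}}"
    by (rule omega2_embedding_pair_pattern[OF assms(2)])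
  have "{a, b, c, d} \<subseteq> Y"
    using abcd(4) assms(3) by (rule subset_trans)
  with abcd(1-3) have "{a, b, c, d} \<in> nsets Y 4"
    by (simp add: nsets_def card_insert_if)
  then have "quad_colour COL {a, b, c, d} = (t1, t2, t3, t4)"
    using assms(1) by blast
  then have "(COL {(a, b), (c, d)}, COL {(a, c), (b, d)}, COL {(a, d), (b, c)},
      COL {(a, b), (a, c)}) = (t1, t2, t3, t4)"
    by (simp add: quad_colour_ordered[OF abcd(1-3)])
  with pattern v show "v \<in> {t1, t2, t3, t4}"
    by auto
qed

lemma omega2_copy_with_at_most_4_colours:
  fixes COL :: "(nat \<times> nat) set \<Rightarrow> 'c"
  assumes "finite (COL ` nsets UNIV 2)"
  shows "\<exists>h :: nat \<times> nat \<Rightarrow> nat \<times> nat. strict_mono h \<and> card (COL ` nsets (range h) 2) \<le> 4"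
proof -
  define K where "K = COL ` nsets UNIV 2"
  have K_pairs: "COL {x, y} \<in> K" if "x \<noteq> y" for x y
    using that by (simp add: K_def)
  have quad_range: "quad_colour COL ` nsets UNIV 4 \<subseteq> K \<times> K \<times> K \<times> K"
  proof
    fix v
    assume "v \<in> quad_colour COL ` nsets UNIV 4"
    then obtain a b c d where "a < b" "b < c" "c < d" "v = quad_colour COL {a, b, c, d}"
      by (auto simp: ordered_nsets_4_eq)
    then show "v \<in> K \<times> K \<times> K \<times> K"
      by (simp add: quad_colour_ordered K_pairs)
  qed
  have "finite (K \<times> K \<times> K \<times> K)"
    using assms by (simp add: K_def)
  then obtain Y t where Y: "infinite Y" "quad_colour COL ` nsets Y 4 \<subseteq> {t}"
    by (rule Ramsey_finite_colours[OF infinite_UNIV_nat _ quad_range]) (rule that)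
  obtain t1 t2 t3 t4 where t: "t = (t1, t2, t3, t4)"
    by (cases t)
  define e where "e = enumerate Y"
  have e: "strict_mono e" "range e \<subseteq> Y"
    using Y(1) by (auto simp: e_def strict_mono_enumerate enumerate_in_set)
  have "card (COL ` nsets (range (omega2_embedding e)) 2) \<le> card {t1, t2, t3, t4}"
    using omega2_embedding_colours[OF Y(2)[unfolded t] e] by (intro card_mono) auto
  also have "\<dots> \<le> 4"
    using card_length[of "[t1, t2, t3, t4]"] by simp
  finally show ?thesis
    using strict_mono_omega2_embedding[OF e(1)] by blast
qed

lemma T_bound_omega2_4: "T_bound 2 omega2 4"
  unfolding T_bound_def
proof (intro allI impI)
  fix c :: nat and COL :: "(nat \<times> nat) set \<Rightarrow> nat"
  assume "COL ` nsubsets omega2 2 \<subseteq> {1..c}"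
  then have "finite (COL ` nsets UNIV 2)"
    by (simp add: omega2_def nsubsets_eq_nsets finite_subset)
  then obtain h :: "nat \<times> nat \<Rightarrow> nat \<times> nat"
    where "strict_mono h" "card (COL ` nsets (range h) 2) \<le> 4"
    using omega2_copy_with_at_most_4_colours by blast
  then show "\<exists>S'. S' \<subseteq> omega2 \<and> order_equiv S' omega2 \<and> card (COL ` nsubsets S' 2) \<le> 4"
    by (intro exI[of _ "range h"])
      (auto simp: omega2_def nsubsets_eq_nsets order_equiv_UNIV_iff)
qed

theorem theorem6p2:
  shows "T 2 omega2 = 4"
  using T_eqI[OF T_bound_omega2_4 T_bound_omega2_ge_4] by (simp add: numeral_eq_enat)

end
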